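(* Let $A$ be a commutative ring and $\varphi:L\to L'$ an isogeny of free abelian groups of finite rank whose degree $\deg\varphi=\#(L'/\varphi(L))$ is invertible in $A$. Then the induced homomorphism $\varphi_R:R(L)\to R(L')$ is an isomorphism.
   Context: An isogeny is an injective homomorphism with finite cokernel. For a free abelian group $L$ of finite rank, $R(L)=\varprojlim_kA[L]/J^k$ is the completion of the group ring $A[L]$ (basis $\delta_\ell$) at its augmentation ideal $J$. The map $\varphi_R$ is the continuous $A$-algebra homomorphism induced by $\delta_\ell\mapsto\delta_{\varphi(\ell)}$. *)

theory Defs
  imports "HOL-Analysis.Finite_Cartesian_Product" "HOL-Library.Poly_Mapping"
begin

text \<open>Free abelian groups of finite rank are modelled as \<open>int ^ 'n\<close> with \<open>'n\<close> finite.
  The group ring A[L] is the type \<open>L \<Rightarrow>\<^sub>0 A\<close> of finitely supported functions with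
  convolution product; \<open>Poly_Mapping.single l 1\<close> is the basis element delta_l.\<close>

definition grp_hom :: "('l::plus \<Rightarrow> 'm::plus) \<Rightarrow> bool" where
  "grp_hom f \<longleftrightarrow> (\<forall>x y. f (x + y) = f x + f y)"

definition cokernel :: "('l \<Rightarrow> 'm::plus) \<Rightarrow> 'm set set" where
  "cokernel f = {(\<lambda>v. y + v) ` range f | y. True}"

definition isogeny :: "('l::plus \<Rightarrow> 'm::plus) \<Rightarrow> bool" where
  "isogeny f \<longleftrightarrow> grp_hom f \<and> inj f \<and> finite (cokernel f)"

definition iso_degree :: "('l \<Rightarrow> 'm::plus) \<Rightarrow> nat" where
  "iso_degree f = card (cokernel f)"

definition augmentation :: "('l \<Rightarrow>\<^sub>0 'a::comm_ring_1) \<Rightarrow> 'a" where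
  "augmentation x = (\<Sum>l\<in>Poly_Mapping.keys x. Poly_Mapping.lookup x l)"

definition aug_ideal :: "('l::comm_monoid_add \<Rightarrow>\<^sub>0 'a::comm_ring_1) set" where
  "aug_ideal = {x. augmentation x = 0}"

inductive_set sum_closure :: "'r::comm_monoid_add set \<Rightarrow> 'r set" for S where
  zero: "0 \<in> sum_closure S"
| base: "x \<in> S \<Longrightarrow> x \<in> sum_closure S"
| add: "x \<in> sum_closure S \<Longrightarrow> y \<in> sum_closure S \<Longrightarrow> x + y \<in> sum_closure S"

fun ideal_pow :: "'r::comm_ring_1 set \<Rightarrow> nat \<Rightarrow> 'r set" where
  "ideal_pow I 0 = UNIV"
| "ideal_pow I (Suc k) = sum_closure {a * b | a b. a \<in> I \<and> b \<in> ideal_pow I k}"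

definition coset_of :: "'r::ab_group_add set \<Rightarrow> 'r \<Rightarrow> 'r set" where
  "coset_of I r = {y. y - r \<in> I}"

text \<open>The completion R(L) = lim_k A[L]/J^k, as compatible families of cosets.\<close>
definition completion :: "(nat \<Rightarrow> ('l::comm_monoid_add \<Rightarrow>\<^sub>0 'a::comm_ring_1) set) set" where
  "completion = {x. \<forall>k. (\<exists>r. x k = coset_of (ideal_pow aug_ideal k) r) \<and> x (Suc k) \<subseteq> x k}"

definition group_ring_map :: "('l \<Rightarrow> 'm) \<Rightarrow> ('l \<Rightarrow>\<^sub>0 'a::comm_ring_1) \<Rightarrow> ('m \<Rightarrow>\<^sub>0 'a)" where
  "group_ring_map f x = (\<Sum>l\<in>Poly_Mapping.keys x. Poly_Mapping.single (f l) (Poly_Mapping.lookup x l))"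

definition completion_map ::
  "('l::comm_monoid_add \<Rightarrow> 'm::comm_monoid_add) \<Rightarrow> (nat \<Rightarrow> ('l \<Rightarrow>\<^sub>0 'a::comm_ring_1) set)
     \<Rightarrow> (nat \<Rightarrow> ('m \<Rightarrow>\<^sub>0 'a) set)" where
  "completion_map f x = (\<lambda>k. \<Union>r\<in>x k. coset_of (ideal_pow aug_ideal k) (group_ring_map f r))"

end

theory Submission
  imports Defs
begin

text \<open>Let \<open>d\<close> be the degree of \<open>\<phi>\<close>. Lagrange's theorem in the finite group \<open>L'/\<phi>(L)\<close> yields a
  dual homomorphism \<open>\<psi>\<close> with \<open>\<phi> \<circ> \<psi> = d\<close> and \<open>\<psi> \<circ> \<phi> = d\<close>. On a group ring the dilation
  \<open>\<delta>\<^sub>l \<mapsto> \<delta>\<^sub>d\<^sub>l\<close> preserves the powers \<open>J\<^sup>m\<close> of the augmentation ideal and acts on \<open>J\<^sup>m/J\<^sup>m\<^sup>+\<^sup>1\<close> as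
  multiplication by the unit \<open>d\<^sup>m\<close>; hence it is strict (it maps no element outside \<open>J\<^sup>k\<close> into
  \<open>J\<^sup>k\<close>) and surjective modulo every \<open>J\<^sup>k\<close>. Both composites of \<open>\<phi>\<^sub>R\<close> and \<open>\<psi>\<^sub>R\<close> being dilations,
  \<open>\<phi>\<^sub>R\<close> is strict and surjective modulo every \<open>J\<^sup>k\<close>, and therefore induces a bijection of the
  inverse limits.\<close>

section \<open>Powers of ideals\<close>

definition is_ideal :: "'r::comm_ring_1 set \<Rightarrow> bool" where
  "is_ideal I \<longleftrightarrow> 0 \<in> I \<and> (\<forall>x\<in>I. \<forall>y\<in>I. x + y \<in> I) \<and> (\<forall>r. \<forall>x\<in>I. r * x \<in> I)"

context
  fixes I :: "'r::comm_ring_1 set"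
  assumes I: "is_ideal I"
begin

lemma ideal_zero: "0 \<in> I"
  using I by (simp add: is_ideal_def)

lemma ideal_add: "x \<in> I \<Longrightarrow> y \<in> I \<Longrightarrow> x + y \<in> I"
  using I by (simp add: is_ideal_def)

lemma ideal_mult_left: "x \<in> I \<Longrightarrow> r * x \<in> I"
  using I by (simp add: is_ideal_def)

lemma ideal_mult_right: "x \<in> I \<Longrightarrow> x * r \<in> I"
  using ideal_mult_left[of x r] by (simp add: mult.commute)

lemma ideal_uminus: "x \<in> I \<Longrightarrow> - x \<in> I"
  using ideal_mult_left[of x "- 1"] by simp

lemma ideal_diff: "x \<in> I \<Longrightarrow> y \<in> I \<Longrightarrow> x - y \<in> I"
  using ideal_add ideal_uminus by (metis diff_conv_add_uminus)

lemma ideal_sum: "(\<And>a. a \<in> A \<Longrightarrow> f a \<in> I) \<Longrightarrow> sum f A \<in> I"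
  by (induction A rule: infinite_finite_induct) (auto intro: ideal_zero ideal_add)

end

lemma sum_closure_least:
  assumes "S \<subseteq> T" "0 \<in> T" "\<And>x y. x \<in> T \<Longrightarrow> y \<in> T \<Longrightarrow> x + y \<in> T"
  shows "sum_closure S \<subseteq> T"
proof
  fix x assume "x \<in> sum_closure S"
  then show "x \<in> T" by induction (use assms in auto)
qed

lemma ideal_pow_Suc_induct [consumes 1, case_names zero prod add]:
  assumes "x \<in> ideal_pow I (Suc k)"
    and "P 0"
    and "\<And>a b. a \<in> I \<Longrightarrow> b \<in> ideal_pow I k \<Longrightarrow> P (a * b)"
    and "\<And>x y. P x \<Longrightarrow> P y \<Longrightarrow> P (x + y)"
  shows "P x"
proof -
  have "x \<in> sum_closure {a * b |a b. a \<in> I \<and> b \<in> ideal_pow I k}"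
    using assms(1) by simp
  then show ?thesis by induction (use assms(2-4) in auto)
qed

lemma ideal_pow_ideal:
  assumes "is_ideal I" shows "is_ideal (ideal_pow I k)"
proof (induction k)
  case 0 then show ?case by (simp add: is_ideal_def)
next
  case (Suc k)
  let ?P = "{a * b |a b. a \<in> I \<and> b \<in> ideal_pow I k}"
  have "r * x \<in> ideal_pow I (Suc k)" if "x \<in> ideal_pow I (Suc k)" for r x
    using that
  proof (induction rule: ideal_pow_Suc_induct)
    case zero then show ?case by (simp add: sum_closure.zero)
  next
    case (prod a b)
    then have "a * (r * b) \<in> ?P" using ideal_mult_left[OF Suc] by blast
    then show ?case by (simp add: sum_closure.base ac_simps)
  next
    case (add x y) then show ?case by (simp add: distrib_left sum_closure.add)
  qed
  then show ?case unfolding is_ideal_def by (auto intro: sum_closure.zero sum_closure.add)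
qed

lemma ideal_pow_Suc_subset:
  assumes "is_ideal I" shows "ideal_pow I (Suc k) \<subseteq> ideal_pow I k"
  unfolding ideal_pow.simps(2)
  by (rule sum_closure_least)
     (auto intro: ideal_zero ideal_add ideal_mult_left ideal_pow_ideal[OF assms])

lemma ideal_pow_antimono:
  assumes "is_ideal I" "m \<le> k" shows "ideal_pow I k \<subseteq> ideal_pow I m"
  using assms(2) by (induction k rule: dec_induct) (use ideal_pow_Suc_subset[OF assms(1)] in blast)+

lemma ideal_pow_mult:
  assumes "is_ideal I" "a \<in> ideal_pow I m" "b \<in> ideal_pow I n"
  shows "a * b \<in> ideal_pow I (m + n)"
  using assms(2)
proof (induction m arbitrary: a)
  case 0 then show ?case using ideal_mult_right[OF ideal_pow_ideal[OF assms(1)] assms(3)]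
    by (simp add: mult.commute)
next
  case (Suc m)
  from Suc.prems show ?case
  proof (induction rule: ideal_pow_Suc_induct)
    case zero then show ?case by (simp add: sum_closure.zero)
  next
    case (prod x y)
    then have "x * (y * b) \<in> {x * y |x y. x \<in> I \<and> y \<in> ideal_pow I (m + n)}"
      using Suc.IH by blast
    then show ?case by (simp add: sum_closure.base ac_simps)
  next
    case (add x y) then show ?case by (simp add: distrib_right sum_closure.add)
  qed
qed

lemma ideal_pow_1:
  assumes "a \<in> I" shows "a \<in> ideal_pow I 1"
proof -
  have "a * 1 \<in> {x * y |x y. x \<in> I \<and> y \<in> ideal_pow I 0}"
    using assms by (intro CollectI exI[of _ a] exI[of _ 1]) simp
  then have "a * 1 \<in> sum_closure {x * y |x y. x \<in> I \<and> y \<in> ideal_pow I 0}"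
    by (rule sum_closure.base)
  then show ?thesis by simp
qed

lemma ideal_pow_image:
  assumes "\<And>x y. h (x + y) = h x + h y" "\<And>x y. h (x * y) = h x * h y" "h 0 = 0"
    and "\<And>x. x \<in> I \<Longrightarrow> h x \<in> I'"
  shows "x \<in> ideal_pow I k \<Longrightarrow> h x \<in> ideal_pow I' k"
proof (induction k arbitrary: x)
  case 0 then show ?case by simp
next
  case (Suc k)
  from Suc.prems show ?case
  proof (induction rule: ideal_pow_Suc_induct)
    case zero then show ?case by (simp add: assms(3) sum_closure.zero)
  next
    case (prod a b)
    with Suc.IH[of b] assms(2,4)[of a] show ?case by (auto intro!: sum_closure.base)
  next
    case (add x y) then show ?case by (simp add: assms(1) sum_closure.add)
  qed
qed

section \<open>Group ring maps and the augmentation\<close>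

context
  fixes f :: "'l::ab_group_add \<Rightarrow> 'm::ab_group_add"
  assumes f: "grp_hom f"
begin

lemma grp_hom_add: "f (x + y) = f x + f y"
  using f by (simp add: grp_hom_def)

lemma grp_hom_zero: "f 0 = 0"
  using grp_hom_add[of 0 0] by simp

lemma grp_hom_uminus: "f (- x) = - f x"
  using grp_hom_add[of "- x" x] by (simp add: grp_hom_zero eq_neg_iff_add_eq_0)

lemma grp_hom_diff: "f (x - y) = f x - f y"
  using grp_hom_add[of "x - y" y] by (simp add: algebra_simps)

lemma grp_hom_sum: "f (sum g A) = (\<Sum>a\<in>A. f (g a))"
  by (induction A rule: infinite_finite_induct) (auto simp: grp_hom_zero grp_hom_add)

end

lemma grp_hom_of_nat_mult:
  assumes "grp_hom (f :: 'l::ring_1 \<Rightarrow> 'm::ring_1)"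
  shows "f (of_nat n * x) = of_nat n * f x"
  by (induction n) (auto simp: grp_hom_add[OF assms] grp_hom_zero[OF assms] distrib_right)

lemma grp_hom_of_nat_mult_left: "grp_hom (\<lambda>l::'l::ring_1. of_nat d * l)"
  by (simp add: grp_hom_def distrib_left)

lemma poly_mapping_sum_single:
  "x = (\<Sum>l\<in>Poly_Mapping.keys x. Poly_Mapping.single l (Poly_Mapping.lookup x l))"
proof (rule poly_mapping_eqI)
  fix k
  have "Poly_Mapping.lookup (\<Sum>l\<in>Poly_Mapping.keys x. Poly_Mapping.single l (Poly_Mapping.lookup x l)) k
      = (\<Sum>l\<in>Poly_Mapping.keys x. if l = k then Poly_Mapping.lookup x l else 0)"
    by (simp add: lookup_sum lookup_single when_def eq_commute)
  also have "\<dots> = Poly_Mapping.lookup x k"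
    by (simp add: in_keys_iff)
  finally show "Poly_Mapping.lookup x k =
      Poly_Mapping.lookup (\<Sum>l\<in>Poly_Mapping.keys x. Poly_Mapping.single l (Poly_Mapping.lookup x l)) k" ..
qed

lemma single_sum: "Poly_Mapping.single k (sum g A) = (\<Sum>a\<in>A. Poly_Mapping.single k (g a))"
  by (induction A rule: infinite_finite_induct) (auto simp: single_add)

lemma group_ring_map_superset:
  assumes "finite K" "Poly_Mapping.keys x \<subseteq> K"
  shows "group_ring_map f x = (\<Sum>l\<in>K. Poly_Mapping.single (f l) (Poly_Mapping.lookup x l))"
  unfolding group_ring_map_def
  by (rule sum.mono_neutral_left) (use assms in \<open>auto simp: in_keys_iff\<close>)

lemma group_ring_map_add: "group_ring_map f (x + y) = group_ring_map f x + group_ring_map f y"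
proof -
  let ?K = "Poly_Mapping.keys x \<union> Poly_Mapping.keys y"
  have "Poly_Mapping.keys (x + y) \<subseteq> ?K" by (rule keys_add)
  then show ?thesis
    using group_ring_map_superset[of ?K "x + y" f] group_ring_map_superset[of ?K x f]
      group_ring_map_superset[of ?K y f]
    by (simp add: lookup_add single_add sum.distrib)
qed

lemma group_ring_map_zero [simp]: "group_ring_map f 0 = 0"
  by (simp add: group_ring_map_def)

lemma group_ring_map_single [simp]:
  "group_ring_map f (Poly_Mapping.single l c) = Poly_Mapping.single (f l) c"
  by (simp add: group_ring_map_def)

lemma grp_hom_group_ring_map: "grp_hom (group_ring_map f)"
  by (simp add: grp_hom_def group_ring_map_add)

lemmas group_ring_map_diff = grp_hom_diff[OF grp_hom_group_ring_map]
lemmas group_ring_map_sum = grp_hom_sum[OF grp_hom_group_ring_map]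

lemma group_ring_map_mult:
  assumes f: "grp_hom (f :: 'l::comm_monoid_add \<Rightarrow> 'm::comm_monoid_add)"
  shows "group_ring_map f (x * y :: 'l \<Rightarrow>\<^sub>0 'a::comm_ring_1) = group_ring_map f x * group_ring_map f y"
proof -
  have "group_ring_map f (x * y) = (\<Sum>a\<in>Poly_Mapping.keys x. \<Sum>b\<in>Poly_Mapping.keys y.
       Poly_Mapping.single (f a + f b) (Poly_Mapping.lookup x a * Poly_Mapping.lookup y b))"
    by (subst (1 2) poly_mapping_sum_single)
       (simp add: sum_product mult_single group_ring_map_sum f[unfolded grp_hom_def])
  also have "\<dots> = group_ring_map f x * group_ring_map f y"
    by (simp add: group_ring_map_def sum_product mult_single)
  finally show ?thesis .
qed

lemma group_ring_map_one:
  assumes "f 0 = 0"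
  shows "group_ring_map f (1 :: 'l::zero \<Rightarrow>\<^sub>0 'a::comm_ring_1) = 1"
  using assms by (metis group_ring_map_single single_one)

lemma group_ring_map_comp: "group_ring_map g (group_ring_map f x) = group_ring_map (g \<circ> f) x"
  by (simp add: group_ring_map_def[of f] group_ring_map_sum group_ring_map_def[of "g \<circ> f"])

lemma single_eq_iff: "Poly_Mapping.single k a = Poly_Mapping.single k b \<longleftrightarrow> a = b"
  by (rule inj_eq[OF inj_single])

text \<open>The augmentation is the group ring map induced by the zero homomorphism, which transfers the
  algebraic properties of \<open>group_ring_map\<close> to it.\<close>

lemma group_ring_map_zero_hom: "group_ring_map (\<lambda>_. 0) x = Poly_Mapping.single 0 (augmentation x)"
  by (simp add: group_ring_map_def augmentation_def single_sum)

lemma augmentation_add: "augmentation (x + y) = augmentation x + augmentation y"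
proof -
  have "Poly_Mapping.single 0 (augmentation (x + y)) =
      Poly_Mapping.single 0 (augmentation x) + Poly_Mapping.single 0 (augmentation y)"
    by (simp flip: group_ring_map_zero_hom add: group_ring_map_add)
  then show ?thesis by (simp flip: single_add add: single_eq_iff)
qed

lemma augmentation_mult:
  "augmentation (x * y :: 'l::comm_monoid_add \<Rightarrow>\<^sub>0 'a::comm_ring_1) = augmentation x * augmentation y"
proof -
  have "Poly_Mapping.single (0::'l) (augmentation (x * y)) =
      Poly_Mapping.single 0 (augmentation x) * Poly_Mapping.single 0 (augmentation y)"
    by (simp flip: group_ring_map_zero_hom add: group_ring_map_mult grp_hom_def)
  then show ?thesis by (simp add: mult_single single_eq_iff)
qed

lemma augmentation_group_ring_map: "augmentation (group_ring_map f x) = augmentation x"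
proof -
  have "Poly_Mapping.single 0 (augmentation (group_ring_map f x)) = Poly_Mapping.single 0 (augmentation x)"
    by (simp add: group_ring_map_comp o_def flip: group_ring_map_zero_hom)
  then show ?thesis by (simp add: single_eq_iff)
qed

lemma augmentation_single [simp]: "augmentation (Poly_Mapping.single l c) = c"
  by (simp add: augmentation_def)

lemma augmentation_one [simp]: "augmentation (1 :: 'l::zero \<Rightarrow>\<^sub>0 'a::comm_ring_1) = 1"
  by (metis augmentation_single single_one)

lemma augmentation_of_nat [simp]:
  "augmentation (of_nat n :: 'l::comm_monoid_add \<Rightarrow>\<^sub>0 'a::comm_ring_1) = of_nat n"
  by (metis augmentation_single single_of_nat)

lemma grp_hom_augmentation: "grp_hom augmentation"
  by (simp add: grp_hom_def augmentation_add)

lemmas augmentation_zero [simp] = grp_hom_zero[OF grp_hom_augmentation]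
lemmas augmentation_diff = grp_hom_diff[OF grp_hom_augmentation]
lemmas augmentation_sum = grp_hom_sum[OF grp_hom_augmentation]

lemma augmentation_power:
  "augmentation (x ^ n :: 'l::comm_monoid_add \<Rightarrow>\<^sub>0 'a::comm_ring_1) = augmentation x ^ n"
  by (induction n) (auto simp: augmentation_mult)

lemma aug_ideal_iff: "x \<in> aug_ideal \<longleftrightarrow> augmentation x = 0"
  by (simp add: aug_ideal_def)

lemma is_ideal_aug_ideal: "is_ideal (aug_ideal :: ('l::comm_monoid_add \<Rightarrow>\<^sub>0 'a::comm_ring_1) set)"
  unfolding is_ideal_def aug_ideal_def by (simp add: augmentation_add augmentation_mult)

lemma group_ring_map_aug_ideal_pow:
  assumes "grp_hom (f :: 'l::comm_monoid_add \<Rightarrow> 'm::comm_monoid_add)"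
    and "x \<in> ideal_pow (aug_ideal :: ('l \<Rightarrow>\<^sub>0 'a::comm_ring_1) set) k"
  shows "group_ring_map f x \<in> ideal_pow aug_ideal k"
  by (rule ideal_pow_image[OF group_ring_map_add group_ring_map_mult[OF assms(1)] group_ring_map_zero _ assms(2)])
     (simp add: aug_ideal_iff augmentation_group_ring_map)

section \<open>Dilations\<close>

abbreviation dilation :: "nat \<Rightarrow> ('l::ring_1 \<Rightarrow>\<^sub>0 'a::comm_ring_1) \<Rightarrow> ('l \<Rightarrow>\<^sub>0 'a)" where
  "dilation d \<equiv> group_ring_map (\<lambda>l. of_nat d * l)"

lemma dilation_mult: "dilation d (x * y) = dilation d x * dilation d y"
  by (rule group_ring_map_mult[OF grp_hom_of_nat_mult_left])

lemma single_one_power: "Poly_Mapping.single (l::'l::ring_1) (1::'a::comm_ring_1) ^ d =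
    Poly_Mapping.single (of_nat d * l) 1"
  by (induction d) (auto simp: mult_single distrib_right)

lemma aug_ideal_eq_sum:
  assumes "a \<in> aug_ideal"
  shows "a = (\<Sum>l\<in>Poly_Mapping.keys a.
    Poly_Mapping.single 0 (Poly_Mapping.lookup a l) * (Poly_Mapping.single l 1 - 1))"
proof -
  have "(\<Sum>l\<in>Poly_Mapping.keys a. Poly_Mapping.single 0 (Poly_Mapping.lookup a l) * (Poly_Mapping.single l 1 - 1))
      = (\<Sum>l\<in>Poly_Mapping.keys a. Poly_Mapping.single l (Poly_Mapping.lookup a l))
        - Poly_Mapping.single 0 (augmentation a)"
    by (simp add: right_diff_distrib mult_single sum_subtractf augmentation_def single_sum)
  also have "\<dots> = a"
    using assms by (simp add: aug_ideal_iff flip: poly_mapping_sum_single)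
  finally show ?thesis by simp
qed

text \<open>For \<open>v = \<delta>\<^sub>l - 1\<close> we have \<open>dilation d v = (1 + v)\<^sup>d - 1 = v * (\<Sum>i<d. (1 + v)\<^sup>i)\<close>,
  and the second factor is \<open>d\<close> modulo the augmentation ideal.\<close>

lemma dilation_basis_aug_ideal_pow_2:
  fixes l :: "'l::ring_1"
  defines "v \<equiv> Poly_Mapping.single l 1 - (1 :: 'l \<Rightarrow>\<^sub>0 'a::comm_ring_1)"
  shows "dilation d v - of_nat d * v \<in> ideal_pow aug_ideal 2"
proof -
  define g where "g = (\<Sum>i<d. (1 + v) ^ i)"
  have "dilation d v = (1 + v) ^ d - 1"
    unfolding v_def by (simp add: group_ring_map_diff group_ring_map_one single_one_power)
  also have "\<dots> = v * g"
    unfolding g_def using power_diff_1_eq[of "1 + v" d] by simp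
  finally have "dilation d v - of_nat d * v = v * (g - of_nat d)"
    by (simp add: algebra_simps)
  moreover have "v \<in> aug_ideal"
    unfolding v_def aug_ideal_iff by (simp add: augmentation_diff)
  moreover have "g - of_nat d \<in> aug_ideal"
  proof -
    have "augmentation (1 + v) = 1"
      unfolding v_def by (simp add: augmentation_add augmentation_diff)
    then show ?thesis
      unfolding aug_ideal_iff g_def by (simp add: augmentation_diff augmentation_sum augmentation_power)
  qed
  ultimately show ?thesis
    using ideal_pow_mult[OF is_ideal_aug_ideal ideal_pow_1 ideal_pow_1, of v "g - of_nat d"]
    by (simp add: numeral_2_eq_2)
qed

lemma dilation_aug_ideal_pow_2:
  fixes a :: "'l::ring_1 \<Rightarrow>\<^sub>0 'a::comm_ring_1"
  assumes "a \<in> aug_ideal"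
  shows "dilation d a - of_nat d * a \<in> ideal_pow aug_ideal 2"
proof -
  define K where "K = Poly_Mapping.keys a"
  define c where "c l = (Poly_Mapping.single 0 (Poly_Mapping.lookup a l) :: 'l \<Rightarrow>\<^sub>0 'a)" for l
  define v where "v l = (Poly_Mapping.single l 1 - 1 :: 'l \<Rightarrow>\<^sub>0 'a)" for l
  have a: "a = (\<Sum>l\<in>K. c l * v l)"
    unfolding K_def c_def v_def by (rule aug_ideal_eq_sum[OF assms])
  have c: "dilation d (c l) = c l" for l
    by (simp add: c_def)
  have "dilation d a - of_nat d * a = (\<Sum>l\<in>K. c l * (dilation d (v l) - of_nat d * v l))"
    by (subst (1 2) a)
       (simp add: group_ring_map_sum dilation_mult c sum_distrib_left sum_subtractf algebra_simps)
  also have "\<dots> \<in> ideal_pow aug_ideal 2"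
    using ideal_pow_ideal[OF is_ideal_aug_ideal]
    by (auto intro!: ideal_sum ideal_mult_left simp: v_def dilation_basis_aug_ideal_pow_2)
  finally show ?thesis .
qed

lemma dilation_ideal_pow:
  fixes z :: "'l::ring_1 \<Rightarrow>\<^sub>0 'a::comm_ring_1"
  assumes "z \<in> ideal_pow aug_ideal m"
  shows "dilation d z - of_nat d ^ m * z \<in> ideal_pow aug_ideal (Suc m)"
  using assms
proof (induction m arbitrary: z)
  case 0
  have "dilation d z - z \<in> aug_ideal"
    by (simp add: aug_ideal_iff augmentation_diff augmentation_group_ring_map)
  then show ?case using ideal_pow_1 by fastforce
next
  case (Suc m)
  let ?J = "aug_ideal :: ('l \<Rightarrow>\<^sub>0 'a) set"
  have J: "is_ideal ?J" by (rule is_ideal_aug_ideal)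
  have I: "is_ideal (ideal_pow ?J (Suc (Suc m)))" by (rule ideal_pow_ideal[OF J])
  from Suc.prems show ?case
  proof (induction rule: ideal_pow_Suc_induct)
    case zero
    show ?case using ideal_zero[OF I] by simp
  next
    case (prod a b)
    define p where "p = dilation d a - of_nat d * a"
    define q where "q = dilation d b - of_nat d ^ m * b"
    have p: "p \<in> ideal_pow ?J 2" unfolding p_def by (rule dilation_aug_ideal_pow_2[OF prod(1)])
    have q: "q \<in> ideal_pow ?J (Suc m)" unfolding q_def by (rule Suc.IH[OF prod(2)])
    have eq: "dilation d (a * b) - of_nat d ^ Suc m * (a * b) =
        of_nat d * (a * q) + of_nat d ^ m * (p * b) + p * q"
      unfolding dilation_mult p_def q_def by (simp add: algebra_simps)
    have f1: "a * q \<in> ideal_pow ?J (Suc (Suc m))"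
      using ideal_pow_mult[OF J ideal_pow_1[OF prod(1)] q] by simp
    have f2: "p * b \<in> ideal_pow ?J (Suc (Suc m))"
      using ideal_pow_mult[OF J p prod(2)] by simp
    have f3: "p * q \<in> ideal_pow ?J (Suc (Suc m))"
      using ideal_pow_mult[OF J p q] ideal_pow_antimono[OF J, of "Suc (Suc m)" "2 + Suc m"] by auto
    show ?case
      unfolding eq by (rule ideal_add[OF I ideal_add[OF I ideal_mult_left[OF I f1] ideal_mult_left[OF I f2]] f3])
  next
    case (add x y)
    have "dilation d (x + y) - of_nat d ^ Suc m * (x + y) =
        (dilation d x - of_nat d ^ Suc m * x) + (dilation d y - of_nat d ^ Suc m * y)"
      by (simp add: group_ring_map_add algebra_simps)
    then show ?case using ideal_add[OF I add.IH] by simp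
  qed
qed

lemma single_inverse_power_cancel:
  assumes "of_nat d * u = (1::'a::comm_ring_1)"
  shows "Poly_Mapping.single (0::'l::comm_monoid_add) u ^ m * (of_nat d ^ m * z) = z"
proof -
  have "of_nat d * Poly_Mapping.single (0::'l) u = 1"
    using assms by (simp flip: single_of_nat add: mult_single)
  then have "Poly_Mapping.single (0::'l) u ^ m * of_nat d ^ m = 1"
    by (simp flip: power_mult_distrib add: mult.commute)
  then show ?thesis by (metis mult.assoc mult_1)
qed

lemma dilation_reflects_ideal_pow:
  fixes z :: "'l::ring_1 \<Rightarrow>\<^sub>0 'a::comm_ring_1" and u :: 'a
  assumes u: "of_nat d * u = 1" and "dilation d z \<in> ideal_pow aug_ideal k"
  shows "z \<in> ideal_pow aug_ideal k"
proof -
  let ?J = "aug_ideal :: ('l \<Rightarrow>\<^sub>0 'a) set"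
  have "z \<in> ideal_pow ?J m" if "m \<le> k" for m
    using that
  proof (induction m)
    case 0 then show ?case by simp
  next
    case (Suc m)
    have I: "is_ideal (ideal_pow ?J (Suc m))"
      by (rule ideal_pow_ideal[OF is_ideal_aug_ideal])
    have "dilation d z \<in> ideal_pow ?J (Suc m)"
      using assms(2) ideal_pow_antimono[OF is_ideal_aug_ideal Suc.prems] by auto
    moreover have "dilation d z - of_nat d ^ m * z \<in> ideal_pow ?J (Suc m)"
      using Suc by (intro dilation_ideal_pow) simp
    ultimately have "of_nat d ^ m * z \<in> ideal_pow ?J (Suc m)"
      using ideal_diff[OF I] by fastforce
    then have "Poly_Mapping.single 0 u ^ m * (of_nat d ^ m * z) \<in> ideal_pow ?J (Suc m)"
      by (rule ideal_mult_left[OF I])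
    then show ?case
      by (simp only: single_inverse_power_cancel[OF u])
  qed
  then show ?thesis by simp
qed

lemma dilation_surj_mod_ideal_pow:
  fixes y :: "'l::ring_1 \<Rightarrow>\<^sub>0 'a::comm_ring_1" and u :: 'a
  assumes u: "of_nat d * u = 1"
  shows "\<exists>w. y - dilation d w \<in> ideal_pow aug_ideal k"
proof -
  let ?J = "aug_ideal :: ('l \<Rightarrow>\<^sub>0 'a) set"
  have I: "is_ideal (ideal_pow ?J k)" by (rule ideal_pow_ideal[OF is_ideal_aug_ideal])
  have "\<forall>z \<in> ideal_pow ?J m. \<exists>w. z - dilation d w \<in> ideal_pow ?J k" if "m \<le> k" for m
    using that
  proof (induction m rule: inc_induct)
    case base
    show ?case using ideal_zero[OF I] by (metis diff_zero group_ring_map_zero)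
  next
    case (step m)
    show ?case
    proof
      fix z assume z: "z \<in> ideal_pow ?J m"
      \<comment> \<open>\<open>w0 = d\<^sup>-\<^sup>m z\<close>, whose dilation agrees with \<open>z\<close> modulo \<open>J\<^sup>m\<^sup>+\<^sup>1\<close>\<close>
      define w0 where "w0 = Poly_Mapping.single 0 u ^ m * z"
      have "w0 \<in> ideal_pow ?J m"
        unfolding w0_def by (rule ideal_mult_left[OF ideal_pow_ideal[OF is_ideal_aug_ideal] z])
      from dilation_ideal_pow[OF this, of d]
      have "dilation d w0 - z \<in> ideal_pow ?J (Suc m)"
        unfolding w0_def by (metis mult.left_commute single_inverse_power_cancel[OF u])
      then obtain w1 where "(dilation d w0 - z) - dilation d w1 \<in> ideal_pow ?J k"
        using step.IH by blast
      from ideal_uminus[OF I this]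
      have "z - dilation d (w0 - w1) \<in> ideal_pow ?J k"
        by (simp add: group_ring_map_diff algebra_simps)
      then show "\<exists>w. z - dilation d w \<in> ideal_pow ?J k" ..
    qed
  qed
  from this[of 0] show ?thesis by simp
qed

section \<open>The dual isogeny\<close>

lemma sum_in_range_grp_hom:
  fixes f :: "'l::ab_group_add \<Rightarrow> 'm::ab_group_add"
  assumes "grp_hom f" "\<And>a. a \<in> A \<Longrightarrow> g a \<in> range f"
  shows "sum g A \<in> range f"
proof -
  define h where "h a = inv f (g a)" for a
  have "\<And>a. a \<in> A \<Longrightarrow> g a = f (h a)"
    using assms(2) by (simp add: h_def f_inv_into_f)
  then have "sum g A = f (sum h A)"
    by (simp add: grp_hom_sum[OF assms(1)])
  then show ?thesis by simp
qed

text \<open>Lagrange's theorem for the finite quotient \<open>L'/\<phi>(L)\<close>: translation by \<open>y\<close> permutes the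
  cosets, so summing representatives shows that \<open>card (cokernel \<phi>) * y\<close> lies in the image.\<close>

lemma card_cokernel_mult_in_range:
  fixes \<phi> :: "'l::ab_group_add \<Rightarrow> 'm::ring_1"
  assumes hom: "grp_hom \<phi>" and fin: "finite (cokernel \<phi>)"
  shows "of_nat (card (cokernel \<phi>)) * y \<in> range \<phi>"
proof -
  let ?H = "range \<phi>" and ?K = "cokernel \<phi>"
  define cs where "cs z = (\<lambda>v. z + v) ` ?H" for z
  have K: "?K = range cs"
    unfolding cokernel_def cs_def by auto
  have mem_cs: "a \<in> cs z \<longleftrightarrow> a - z \<in> ?H" for a z
  proof
    assume "a - z \<in> ?H"
    then have "z + (a - z) \<in> cs z" unfolding cs_def by blast
    then show "a \<in> cs z" by simp
  qed (auto simp: cs_def)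
  define rep where "rep C = (SOME z. C = cs z)" for C
  have cs_rep: "cs (rep C) = C" if C: "C \<in> ?K" for C
  proof -
    obtain z where "C = cs z" using C unfolding K by blast
    then show ?thesis unfolding rep_def by (rule someI2) simp
  qed
  define T where "T C = (\<lambda>v. y + v) ` C" for C
  have T_cs: "T (cs z) = cs (y + z)" for z
    unfolding T_def cs_def image_image by (simp add: add.assoc)
  have "T ` ?K \<subseteq> ?K"
    unfolding K by (auto simp: T_cs)
  moreover have "inj_on T ?K"
    unfolding T_def by (rule inj_onI) (simp add: inj_image_eq_iff)
  ultimately have T_K: "T ` ?K = ?K"
    by (rule endo_inj_surj[OF fin])
  have "rep (T C) - (y + rep C) \<in> ?H" if C: "C \<in> ?K" for C
  proof -
    have "T C \<in> ?K" using T_K C by blast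
    then have "rep (T C) \<in> cs (rep (T C))"
      unfolding mem_cs by (simp add: grp_hom_zero[OF hom, symmetric])
    also have "\<dots> = cs (y + rep C)"
      using cs_rep[OF \<open>T C \<in> ?K\<close>] T_cs[of "rep C"] cs_rep[OF C] by simp
    finally show ?thesis by (simp only: mem_cs)
  qed
  then have "(\<Sum>C\<in>?K. rep (T C) - (y + rep C)) \<in> ?H"
    by (rule sum_in_range_grp_hom[OF hom])
  moreover have "(\<Sum>C\<in>?K. rep (T C)) = (\<Sum>C\<in>?K. rep C)"
    using sum.reindex[OF \<open>inj_on T ?K\<close>, of rep] T_K by simp
  ultimately have "- (of_nat (card ?K) * y) \<in> ?H"
    by (simp add: sum_subtractf sum.distrib)
  then obtain x where "- (of_nat (card ?K) * y) = \<phi> x" by blast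
  then have "of_nat (card ?K) * y = \<phi> (- x)"
    by (simp add: grp_hom_uminus[OF hom] minus_equation_iff)
  then show ?thesis by simp
qed

lemma isogeny_dual:
  fixes \<phi> :: "'l::ring_1 \<Rightarrow> 'm::ring_1"
  assumes "isogeny \<phi>"
  obtains \<psi> where "grp_hom \<psi>"
    "\<And>y. \<phi> (\<psi> y) = of_nat (iso_degree \<phi>) * y"
    "\<And>x. \<psi> (\<phi> x) = of_nat (iso_degree \<phi>) * x"
proof
  have hom: "grp_hom \<phi>" and inj: "inj \<phi>" and fin: "finite (cokernel \<phi>)"
    using assms by (auto simp: isogeny_def)
  let ?d = "of_nat (iso_degree \<phi>)"
  define \<psi> where "\<psi> y = inv \<phi> (?d * y)" for y
  show \<phi>\<psi>: "\<phi> (\<psi> y) = ?d * y" for y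
    unfolding \<psi>_def iso_degree_def
    by (rule f_inv_into_f[OF card_cokernel_mult_in_range[OF hom fin]])
  show "grp_hom \<psi>"
    unfolding grp_hom_def
  proof (intro allI)
    fix a b
    have "\<phi> (\<psi> a + \<psi> b) = \<phi> (\<psi> (a + b))"
      by (simp add: grp_hom_add[OF hom] \<phi>\<psi> distrib_left)
    then show "\<psi> (a + b) = \<psi> a + \<psi> b"
      using inj by (simp add: inj_eq)
  qed
  show "\<psi> (\<phi> x) = ?d * x" for x
  proof -
    have "\<phi> (\<psi> (\<phi> x)) = \<phi> (?d * x)"
      by (simp add: \<phi>\<psi> grp_hom_of_nat_mult[OF hom])
    then show ?thesis using inj by (simp add: inj_eq)
  qed
qed

section \<open>Inverse limits of filtered groups\<close>

definition add_subgroup :: "'a::ab_group_add set \<Rightarrow> bool" where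
  "add_subgroup G \<longleftrightarrow> 0 \<in> G \<and> (\<forall>x\<in>G. \<forall>y\<in>G. x - y \<in> G)"

context
  fixes G :: "'a::ab_group_add set"
  assumes G: "add_subgroup G"
begin

lemma add_subgroup_zero: "0 \<in> G"
  using G by (simp add: add_subgroup_def)

lemma add_subgroup_diff: "x \<in> G \<Longrightarrow> y \<in> G \<Longrightarrow> x - y \<in> G"
  using G by (simp add: add_subgroup_def)

lemma add_subgroup_uminus: "x \<in> G \<Longrightarrow> - x \<in> G"
  using add_subgroup_diff[OF add_subgroup_zero] by fastforce

lemma add_subgroup_add: "x \<in> G \<Longrightarrow> y \<in> G \<Longrightarrow> x + y \<in> G"
  using add_subgroup_diff[of x "- y"] add_subgroup_uminus by fastforce

lemma coset_of_self: "a \<in> coset_of G a"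
  by (simp add: coset_of_def add_subgroup_zero)

lemma coset_of_eq_iff: "coset_of G a = coset_of G b \<longleftrightarrow> a - b \<in> G"
proof
  assume "coset_of G a = coset_of G b"
  then show "a - b \<in> G" using coset_of_self[of a] by (simp add: coset_of_def)
next
  assume ab: "a - b \<in> G"
  have "y - b \<in> G \<longleftrightarrow> y - a \<in> G" for y
    using add_subgroup_add[OF _ ab, of "y - a"] add_subgroup_diff[OF _ ab, of "y - b"] by auto
  then show "coset_of G a = coset_of G b"
    unfolding coset_of_def by blast
qed

end

lemma add_subgroup_ideal: "is_ideal I \<Longrightarrow> add_subgroup I"
  by (simp add: add_subgroup_def ideal_zero ideal_diff)

definition compatible_cosets :: "(nat \<Rightarrow> 'x::ab_group_add set) \<Rightarrow> (nat \<Rightarrow> 'x set) set" where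
  "compatible_cosets I = {X. \<forall>k. (\<exists>r. X k = coset_of (I k) r) \<and> X (Suc k) \<subseteq> X k}"

definition coset_map ::
  "('x \<Rightarrow> 'y::ab_group_add) \<Rightarrow> (nat \<Rightarrow> 'y set) \<Rightarrow> (nat \<Rightarrow> 'x set) \<Rightarrow> nat \<Rightarrow> 'y set" where
  "coset_map F I' X = (\<lambda>k. \<Union>r\<in>X k. coset_of (I' k) (F r))"

lemma completion_eq_compatible_cosets: "completion = compatible_cosets (ideal_pow aug_ideal)"
  by (simp add: completion_def compatible_cosets_def)

lemma completion_map_eq_coset_map:
  "completion_map f = coset_map (group_ring_map f) (ideal_pow aug_ideal)"
  by (simp add: completion_map_def coset_map_def fun_eq_iff)

locale filtered_iso =
  fixes F :: "'x::ab_group_add \<Rightarrow> 'y::ab_group_add"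
    and I :: "nat \<Rightarrow> 'x set" and I' :: "nat \<Rightarrow> 'y set"
  assumes hom: "grp_hom F"
    and subgroup: "add_subgroup (I k)" and subgroup': "add_subgroup (I' k)"
    and decreasing: "I (Suc k) \<subseteq> I k" and decreasing': "I' (Suc k) \<subseteq> I' k"
    and preserves: "x \<in> I k \<Longrightarrow> F x \<in> I' k"
    and reflects: "F x \<in> I' k \<Longrightarrow> x \<in> I k"
    and surj_mod: "\<exists>x. y - F x \<in> I' k"
begin

lemma coset_map_coset:
  assumes "X k = coset_of (I k) r"
  shows "coset_map F I' X k = coset_of (I' k) (F r)"
proof -
  have "coset_of (I' k) (F s) = coset_of (I' k) (F r)" if "s \<in> X k" for s
  proof -
    have "s - r \<in> I k" using that assms by (simp add: coset_of_def)
    then show ?thesis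
      using preserves by (simp add: coset_of_eq_iff[OF subgroup'] grp_hom_diff[OF hom, symmetric])
  qed
  moreover have "r \<in> X k" using assms coset_of_self[OF subgroup] by simp
  ultimately show ?thesis unfolding coset_map_def by blast
qed

lemma coset_map_in_compatible_cosets:
  assumes X: "X \<in> compatible_cosets I"
  shows "coset_map F I' X \<in> compatible_cosets I'"
  unfolding compatible_cosets_def
proof (intro CollectI allI conjI)
  fix k
  obtain r where "X k = coset_of (I k) r" using X unfolding compatible_cosets_def by blast
  then show "\<exists>r. coset_map F I' X k = coset_of (I' k) r" using coset_map_coset by blast
  show "coset_map F I' X (Suc k) \<subseteq> coset_map F I' X k"
    using X decreasing' by (fastforce simp: compatible_cosets_def coset_map_def coset_of_def)
qed

lemma inj_on_coset_map: "inj_on (coset_map F I') (compatible_cosets I)"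
proof (rule inj_onI, rule ext)
  fix X Y k
  assume X: "X \<in> compatible_cosets I" and Y: "Y \<in> compatible_cosets I"
    and eq: "coset_map F I' X = coset_map F I' Y"
  obtain r s where r: "X k = coset_of (I k) r" and s: "Y k = coset_of (I k) s"
    using X Y unfolding compatible_cosets_def by blast
  have "coset_of (I' k) (F r) = coset_of (I' k) (F s)"
    using eq coset_map_coset[of X k r, OF r] coset_map_coset[of Y k s, OF s] by simp
  then have "F (r - s) \<in> I' k"
    by (simp add: coset_of_eq_iff[OF subgroup'] grp_hom_diff[OF hom])
  then show "X k = Y k"
    using r s reflects by (simp add: coset_of_eq_iff[OF subgroup])
qed

lemma compatible_cosets_subset_image:
  assumes Y: "Y \<in> compatible_cosets I'"
  shows "Y \<in> coset_map F I' ` compatible_cosets I"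
proof -
  have "\<forall>k. \<exists>r. Y k = coset_of (I' k) r"
    using Y unfolding compatible_cosets_def by blast
  from choice[OF this] obtain s where s: "\<And>k. Y k = coset_of (I' k) (s k)"
    by blast
  have "\<forall>k. \<exists>x. s k - F x \<in> I' k"
    using surj_mod by blast
  from choice[OF this] obtain x where x: "\<And>k. s k - F (x k) \<in> I' k"
    by blast
  define X where "X k = coset_of (I k) (x k)" for k
  have step: "x (Suc k) - x k \<in> I k" for k
  proof (rule reflects)
    have "s (Suc k) \<in> Y (Suc k)"
      using s coset_of_self[OF subgroup'] by simp
    then have "s (Suc k) \<in> Y k"
      using Y unfolding compatible_cosets_def by blast
    then have "s (Suc k) - s k \<in> I' k"
      using s by (simp add: coset_of_def)
    moreover have "s (Suc k) - F (x (Suc k)) \<in> I' k"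
      using x decreasing' by blast
    moreover have "F (x (Suc k) - x k) =
        (s k - F (x k)) - ((s (Suc k) - F (x (Suc k))) - (s (Suc k) - s k))"
      by (simp add: grp_hom_diff[OF hom] algebra_simps)
    ultimately show "F (x (Suc k) - x k) \<in> I' k"
      using x add_subgroup_diff[OF subgroup'] by metis
  qed
  have "X (Suc k) \<subseteq> X k" for k
  proof
    fix z assume "z \<in> X (Suc k)"
    then have "z - x (Suc k) \<in> I k"
      using decreasing unfolding X_def coset_of_def by blast
    from add_subgroup_add[OF subgroup this step] show "z \<in> X k"
      by (simp add: X_def coset_of_def)
  qed
  then have XA: "X \<in> compatible_cosets I"
    unfolding compatible_cosets_def X_def by blast
  have "coset_map F I' X k = Y k" for k
  proof -
    have "coset_map F I' X k = coset_of (I' k) (F (x k))"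
      by (rule coset_map_coset) (simp add: X_def)
    also have "\<dots> = coset_of (I' k) (s k)"
      unfolding coset_of_eq_iff[OF subgroup'] using add_subgroup_uminus[OF subgroup' x] by simp
    finally show ?thesis by (simp add: s)
  qed
  then show ?thesis using XA by blast
qed

lemma bij_betw_coset_map:
  "bij_betw (coset_map F I') (compatible_cosets I) (compatible_cosets I')"
  unfolding bij_betw_def
  using inj_on_coset_map coset_map_in_compatible_cosets compatible_cosets_subset_image by blast

end

lemma bij_betw_completion_map:
  fixes \<phi> :: "'l::ring_1 \<Rightarrow> 'm::ring_1" and \<psi> :: "'m \<Rightarrow> 'l" and u :: "'a::comm_ring_1"
  assumes hom: "grp_hom \<phi>" "grp_hom \<psi>"
    and \<phi>\<psi>: "\<And>y. \<phi> (\<psi> y) = of_nat d * y" and \<psi>\<phi>: "\<And>x. \<psi> (\<phi> x) = of_nat d * x"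
    and u: "of_nat d * u = 1"
  shows "bij_betw (completion_map \<phi>) (completion :: (nat \<Rightarrow> ('l \<Rightarrow>\<^sub>0 'a) set) set) completion"
proof -
  have \<psi>\<phi>_dilation: "group_ring_map \<psi> (group_ring_map \<phi> x) = dilation d x" for x :: "'l \<Rightarrow>\<^sub>0 'a"
    by (simp add: group_ring_map_comp o_def \<psi>\<phi>)
  have \<phi>\<psi>_dilation: "group_ring_map \<phi> (group_ring_map \<psi> y) = dilation d y" for y :: "'m \<Rightarrow>\<^sub>0 'a"
    by (simp add: group_ring_map_comp o_def \<phi>\<psi>)
  interpret filtered_iso "group_ring_map \<phi> :: ('l \<Rightarrow>\<^sub>0 'a) \<Rightarrow> _" "ideal_pow aug_ideal" "ideal_pow aug_ideal"
  proof
    fix k :: nat and x :: "'l \<Rightarrow>\<^sub>0 'a" and y :: "'m \<Rightarrow>\<^sub>0 'a"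
    show "grp_hom (group_ring_map \<phi> :: ('l \<Rightarrow>\<^sub>0 'a) \<Rightarrow> _)" by (rule grp_hom_group_ring_map)
    show "add_subgroup (ideal_pow aug_ideal k :: ('l \<Rightarrow>\<^sub>0 'a) set)"
      "add_subgroup (ideal_pow aug_ideal k :: ('m \<Rightarrow>\<^sub>0 'a) set)"
      by (intro add_subgroup_ideal ideal_pow_ideal is_ideal_aug_ideal)+
    show "ideal_pow aug_ideal (Suc k) \<subseteq> (ideal_pow aug_ideal k :: ('l \<Rightarrow>\<^sub>0 'a) set)"
      "ideal_pow aug_ideal (Suc k) \<subseteq> (ideal_pow aug_ideal k :: ('m \<Rightarrow>\<^sub>0 'a) set)"
      by (intro ideal_pow_Suc_subset is_ideal_aug_ideal)+
    show "x \<in> ideal_pow aug_ideal k \<Longrightarrow> group_ring_map \<phi> x \<in> ideal_pow aug_ideal k"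
      by (rule group_ring_map_aug_ideal_pow[OF hom(1)])
    show "x \<in> ideal_pow aug_ideal k" if "group_ring_map \<phi> x \<in> ideal_pow aug_ideal k"
    proof (rule dilation_reflects_ideal_pow[OF u])
      show "dilation d x \<in> ideal_pow aug_ideal k"
        using group_ring_map_aug_ideal_pow[OF hom(2) that] by (simp only: \<psi>\<phi>_dilation)
    qed
    obtain w where "y - dilation d w \<in> ideal_pow aug_ideal k"
      using dilation_surj_mod_ideal_pow[OF u] by blast
    then show "\<exists>x. y - group_ring_map \<phi> x \<in> ideal_pow aug_ideal k"
      by (intro exI[of _ "group_ring_map \<psi> w"]) (simp only: \<phi>\<psi>_dilation)
  qed
  show ?thesis
    using bij_betw_coset_map
    by (simp add: completion_eq_compatible_cosets completion_map_eq_coset_map)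
qed

theorem mainTheorem10:
  fixes \<phi> :: "int ^ 'n::finite \<Rightarrow> int ^ 'm::finite"
  assumes "isogeny \<phi>"
    and "\<exists>u::'a::comm_ring_1. of_nat (iso_degree \<phi>) * u = 1"
  shows "bij_betw (completion_map \<phi>)
           (completion :: (nat \<Rightarrow> (int ^ 'n \<Rightarrow>\<^sub>0 'a) set) set)
           (completion :: (nat \<Rightarrow> (int ^ 'm \<Rightarrow>\<^sub>0 'a) set) set)"
proof -
  obtain \<psi> where \<psi>: "grp_hom \<psi>"
    "\<And>y. \<phi> (\<psi> y) = of_nat (iso_degree \<phi>) * y" "\<And>x. \<psi> (\<phi> x) = of_nat (iso_degree \<phi>) * x"
    using isogeny_dual[OF assms(1)] by blast
  have "grp_hom \<phi>"
    using assms(1) by (simp add: isogeny_def)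
  from assms(2) obtain u :: 'a where "of_nat (iso_degree \<phi>) * u = 1" ..
  then show ?thesis
    by (rule bij_betw_completion_map[OF \<open>grp_hom \<phi>\<close> \<psi>])
qed

end
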